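(* Let $\mathcal{L}$, $t$, $p<1$, $q$ (with $p^2+q>1$), $A$, $\delta$, $\lambda$ be as in the setting below. Let $(G,\mathbf{x})$ be a configuration, $\mathrm{Id}$ an identity assignment, and $(S,U_1,U_2)$ a splitter of $(G,\mathbf{x},\mathrm{Id})$ with $r_S\ge1$, such that $(G[U_1\cup S],\mathbf{x}[U_1\cup S])\in\mathcal{L}$. Let $d=\lambda r_S$. Then there exists an integer $i$ with $2r_S<i<d-2r_S$ and $i\notin I$, where $$I=\{i\in\mathbb{Z}: 2r_S<i<d-2r_S,\ \Pr[\mathcal{E}(S_i)]<1-\delta\}.$$
   Context: Setting. $\mathcal{L}$ is a distributed language (a decidable set of configurations $(G,\mathbf{x})$, with $G$ a finite connected graph and $\mathbf{x}:V(G)\to\{0,1\}^*$). $t$ is a time bound, i.e., a function of triplets $(G,\mathbf{x},\mathrm{Id})$ that is non-decreasing under passing to connected induced subgraphs with restricted inputs and identities. $p,q\in(0,1]$ satisfy $p^2+q>1$ and $p<1$. $A$ is a randomized algorithm in the synchronous LOCAL model running in time $t$ that is a $(p,q)$-decider for $\mathcal{L}$: for every configuration and injective identity assignment $\mathrm{Id}$, members are accepted by all nodes with probability at least $p$, and non-members are rejected by some node with probability at least $q$. In this model, the output of $v$ after $r$ rounds depends only on the identities, inputs, adjacencies and random bits in the ball $B_G(v,r)$. Fix $\delta$ with $0<\delta<p^2+q-1$ and $\lambda=11\lceil\log p/\log(1-\delta)\rceil$. Notation relative to $A$ and $(G,\mathbf{x},\mathrm{Id})$: - $t_v$ is the maximum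 over all coin tosses of the number of rounds until $v$ outputs. - $r_v=\max\{t_u: v\in B_G(u,t_u)\}$, and $r_S=\max_{v\in S} r_v$. - A splitter is a triple $(S,U_1,U_2)$ of pairwise disjoint sets covering $V(G)$ with $\min\{\mathrm{dist}_G(u,v):u\in U_1,v\in U_2\}\ge\lambda r_S$. - For $u\in S$, its level is $\ell(u)=\min_{w\in U_1}\mathrm{dist}_G(w,u)$, and $L_j$ is the set of nodes of $S$ of level $j$. - For an integer $i$ with $r_S<i<d-r_S$, $S_i=\bigcup_{j=i-r_S}^{i+r_S}L_j$. - For $U\subseteq V(G)$, $\mathcal{E}(U)$ is the event that, when $A$ runs on $(G,\mathbf{x})$ with $\mathrm{Id}$, all nodes of $U$ output "yes". *)

theory Defs
  imports "HOL-Probability.Probability"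
begin

fun rw :: "'v set \<Rightarrow> ('v \<Rightarrow> 'v \<Rightarrow> bool) \<Rightarrow> nat \<Rightarrow> 'v \<Rightarrow> 'v \<Rightarrow> bool" where
  "rw V E 0 u w = (u = w \<and> u \<in> V)"
| "rw V E (Suc n) u w = (rw V E n u w \<or> (\<exists>z. rw V E n u z \<and> w \<in> V \<and> E z w))"

definition ball :: "'v set \<Rightarrow> ('v \<Rightarrow> 'v \<Rightarrow> bool) \<Rightarrow> 'v \<Rightarrow> nat \<Rightarrow> 'v set" where
  "ball V E v r = {w. rw V E r v w}"

definition gdist :: "'v set \<Rightarrow> ('v \<Rightarrow> 'v \<Rightarrow> bool) \<Rightarrow> 'v \<Rightarrow> 'v \<Rightarrow> nat" where
  "gdist V E u w = (LEAST n. rw V E n u w)"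

definition connected_graph :: "'v set \<Rightarrow> ('v \<Rightarrow> 'v \<Rightarrow> bool) \<Rightarrow> bool" where
  "connected_graph V E \<longleftrightarrow> finite V \<and> V \<noteq> {} \<and>
     (\<forall>a b. E a b \<longrightarrow> a \<in> V \<and> b \<in> V \<and> E b a \<and> a \<noteq> b) \<and>
     (\<forall>u\<in>V. \<forall>w\<in>V. \<exists>n. rw V E n u w)"

definition induced :: "('v \<Rightarrow> 'v \<Rightarrow> bool) \<Rightarrow> 'v set \<Rightarrow> 'v \<Rightarrow> 'v \<Rightarrow> bool" where
  "induced E W = (\<lambda>a b. E a b \<and> a \<in> W \<and> b \<in> W)"

definition coin_space :: "(nat \<Rightarrow> bool) measure" where
  "coin_space = PiM UNIV (\<lambda>_. measure_pmf (bernoulli_pmf (1/2)))"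

definition rand_space :: "'v set \<Rightarrow> ('v \<Rightarrow> nat \<Rightarrow> bool) measure" where
  "rand_space V = PiM V (\<lambda>_. coin_space)"

text \<open>A V E x ids \<omega> v r is the state of node v after r rounds: None = no output yet,
  Some b = v has output b (True = yes).\<close>
type_synonym 'v alg =
  "'v set \<Rightarrow> ('v \<Rightarrow> 'v \<Rightarrow> bool) \<Rightarrow> ('v \<Rightarrow> bool list) \<Rightarrow> ('v \<Rightarrow> nat) \<Rightarrow> ('v \<Rightarrow> nat \<Rightarrow> bool)
   \<Rightarrow> 'v \<Rightarrow> nat \<Rightarrow> bool option"

type_synonym 'v tbound = "'v set \<Rightarrow> ('v \<Rightarrow> 'v \<Rightarrow> bool) \<Rightarrow> ('v \<Rightarrow> bool list) \<Rightarrow> ('v \<Rightarrow> nat) \<Rightarrow> nat"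

type_synonym 'v language = "('v set \<times> ('v \<Rightarrow> 'v \<Rightarrow> bool) \<times> ('v \<Rightarrow> bool list)) set"

definition local_alg :: "'v alg \<Rightarrow> bool" where
  "local_alg A \<longleftrightarrow> (\<forall>V E x ids \<omega> V' E' x' ids' \<omega>' v r.
     connected_graph V E \<and> connected_graph V' E' \<and>
     \<omega> \<in> space (rand_space V) \<and> \<omega>' \<in> space (rand_space V') \<and>
     v \<in> V \<and> v \<in> V' \<and> ball V E v r = ball V' E' v r \<and>
     (\<forall>a\<in>ball V E v r. \<forall>b\<in>ball V E v r. E a b = E' a b) \<and>
     (\<forall>a\<in>ball V E v r. x a = x' a \<and> ids a = ids' a \<and> \<omega> a = \<omega>' a)
     \<longrightarrow> A V E x ids \<omega> v r = A V' E' x' ids' \<omega>' v r)"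

definition measurable_alg :: "'v alg \<Rightarrow> bool" where
  "measurable_alg A \<longleftrightarrow> (\<forall>V E x ids v r. connected_graph V E \<and> v \<in> V \<longrightarrow>
     (\<lambda>\<omega>. A V E x ids \<omega> v r) \<in> rand_space V \<rightarrow>\<^sub>M count_space UNIV)"

definition halt_round :: "'v alg \<Rightarrow> 'v set \<Rightarrow> ('v \<Rightarrow> 'v \<Rightarrow> bool) \<Rightarrow> ('v \<Rightarrow> bool list)
    \<Rightarrow> ('v \<Rightarrow> nat) \<Rightarrow> ('v \<Rightarrow> nat \<Rightarrow> bool) \<Rightarrow> 'v \<Rightarrow> nat" where
  "halt_round A V E x ids \<omega> v = (LEAST r. A V E x ids \<omega> v r \<noteq> None)"

definition outp :: "'v alg \<Rightarrow> 'v set \<Rightarrow> ('v \<Rightarrow> 'v \<Rightarrow> bool) \<Rightarrow> ('v \<Rightarrow> bool list)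
    \<Rightarrow> ('v \<Rightarrow> nat) \<Rightarrow> ('v \<Rightarrow> nat \<Rightarrow> bool) \<Rightarrow> 'v \<Rightarrow> bool" where
  "outp A V E x ids \<omega> v =
     (case A V E x ids \<omega> v (halt_round A V E x ids \<omega> v) of Some b \<Rightarrow> b | None \<Rightarrow> False)"

definition runs_in_time :: "'v alg \<Rightarrow> 'v tbound \<Rightarrow> bool" where
  "runs_in_time A t \<longleftrightarrow> (\<forall>V E x ids. connected_graph V E \<and> inj_on ids V \<longrightarrow>
     (\<forall>\<omega>\<in>space (rand_space V). \<forall>v\<in>V. A V E x ids \<omega> v (t V E x ids) \<noteq> None))"

definition time_bound_mono :: "'v tbound \<Rightarrow> bool" where
  "time_bound_mono t \<longleftrightarrow> (\<forall>V E x ids W. connected_graph V E \<and> W \<subseteq> V \<and>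
     connected_graph W (induced E W) \<longrightarrow> t W (induced E W) x ids \<le> t V E x ids)"

definition Ev :: "'v alg \<Rightarrow> 'v set \<Rightarrow> ('v \<Rightarrow> 'v \<Rightarrow> bool) \<Rightarrow> ('v \<Rightarrow> bool list)
    \<Rightarrow> ('v \<Rightarrow> nat) \<Rightarrow> 'v set \<Rightarrow> ('v \<Rightarrow> nat \<Rightarrow> bool) set" where
  "Ev A V E x ids U = {\<omega> \<in> space (rand_space V). \<forall>u\<in>U. outp A V E x ids \<omega> u}"

definition decider :: "'v alg \<Rightarrow> 'v language \<Rightarrow> real \<Rightarrow> real \<Rightarrow> bool" where
  "decider A L p q \<longleftrightarrow> (\<forall>V E x ids. connected_graph V E \<and> inj_on ids V \<longrightarrow>
     ((V, E, restrict x V) \<in> L \<longrightarrow> p \<le> measure (rand_space V) (Ev A V E x ids V)) \<and>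
     ((V, E, restrict x V) \<notin> L \<longrightarrow> q \<le> measure (rand_space V)
         {\<omega> \<in> space (rand_space V). \<exists>v\<in>V. \<not> outp A V E x ids \<omega> v}))"

definition t_node :: "'v alg \<Rightarrow> 'v set \<Rightarrow> ('v \<Rightarrow> 'v \<Rightarrow> bool) \<Rightarrow> ('v \<Rightarrow> bool list)
    \<Rightarrow> ('v \<Rightarrow> nat) \<Rightarrow> 'v \<Rightarrow> nat" where
  "t_node A V E x ids v = Max {halt_round A V E x ids \<omega> v | \<omega>. \<omega> \<in> space (rand_space V)}"

definition r_node :: "'v alg \<Rightarrow> 'v set \<Rightarrow> ('v \<Rightarrow> 'v \<Rightarrow> bool) \<Rightarrow> ('v \<Rightarrow> bool list)
    \<Rightarrow> ('v \<Rightarrow> nat) \<Rightarrow> 'v \<Rightarrow> nat" where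
  "r_node A V E x ids v = Max {t_node A V E x ids u | u. u \<in> V \<and> v \<in> ball V E u (t_node A V E x ids u)}"

definition r_set :: "'v alg \<Rightarrow> 'v set \<Rightarrow> ('v \<Rightarrow> 'v \<Rightarrow> bool) \<Rightarrow> ('v \<Rightarrow> bool list)
    \<Rightarrow> ('v \<Rightarrow> nat) \<Rightarrow> 'v set \<Rightarrow> nat" where
  "r_set A V E x ids S = Max (r_node A V E x ids ` S)"

definition splitter :: "'v alg \<Rightarrow> 'v set \<Rightarrow> ('v \<Rightarrow> 'v \<Rightarrow> bool) \<Rightarrow> ('v \<Rightarrow> bool list)
    \<Rightarrow> ('v \<Rightarrow> nat) \<Rightarrow> nat \<Rightarrow> 'v set \<Rightarrow> 'v set \<Rightarrow> 'v set \<Rightarrow> bool" where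
  "splitter A V E x ids lam S U1 U2 \<longleftrightarrow>
     S \<inter> U1 = {} \<and> S \<inter> U2 = {} \<and> U1 \<inter> U2 = {} \<and> S \<union> U1 \<union> U2 = V \<and>
     (\<forall>u\<in>U1. \<forall>w\<in>U2. lam * r_set A V E x ids S \<le> gdist V E u w)"

definition level :: "'v set \<Rightarrow> ('v \<Rightarrow> 'v \<Rightarrow> bool) \<Rightarrow> 'v set \<Rightarrow> 'v \<Rightarrow> nat" where
  "level V E U1 u = Min ((\<lambda>w. gdist V E w u) ` U1)"

definition slab :: "'v set \<Rightarrow> ('v \<Rightarrow> 'v \<Rightarrow> bool) \<Rightarrow> 'v set \<Rightarrow> 'v set \<Rightarrow> nat \<Rightarrow> int \<Rightarrow> 'v set" where
  "slab V E U1 S r i = (\<Union>j\<in>{i - int r .. i + int r}. {u \<in> S. int (level V E U1 u) = j})"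

end

theory Submission
  imports Defs
begin

text \<open>
  If \<open>U1 = {}\<close>, all levels coincide and some slab in the range is empty, so it
  accepts with probability 1. Otherwise, suppose every slab in the range accepts with probability
  below \<open>1 - \<delta>\<close>. Choose the \<open>k = \<lceil>log p / log (1 - \<delta>)\<rceil>\<close> slabs centred at
  \<open>2 r_S + 1 + m (4 r_S + 1)\<close>, \<open>m < k\<close>; they fit in the range because \<open>d = 11 k r_S\<close>.
  The view of a node \<open>u\<close> (its ball of radius \<open>t_u\<close>) is contained in its ball of radius \<open>r_S\<close>,
  so (1) the views of these slabs avoid \<open>U2\<close>, and (2) they are pairwise disjoint, because levels
  are 1-Lipschitz and the slabs are more than \<open>4 r_S\<close> levels apart. By locality and (1), the
  slabs accept jointly as they do in \<open>G[U1 \<union> S]\<close>, a member of the language, hence with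
  probability at least \<open>p\<close>; by (2) and the independence of the nodes' coins they accept
  independently, hence with probability below \<open>(1 - \<delta>)^k \<le> p\<close>, a contradiction.
\<close>

lemma space_coin_space: "space coin_space = UNIV"
  by (auto simp: coin_space_def space_PiM PiE_def extensional_def)

lemma prob_space_coin_space: "prob_space coin_space"
  unfolding coin_space_def by (intro prob_space_PiM prob_space_measure_pmf)

lemma prob_space_rand_space: "prob_space (rand_space V)"
  unfolding rand_space_def by (intro prob_space_PiM prob_space_coin_space)

lemma product_prob_space_coins: "product_prob_space (\<lambda>_::'a. coin_space)"
  by (simp add: product_prob_space_def product_sigma_finite_def prob_space_coin_space
      prob_space_imp_sigma_finite product_prob_space_axioms_def)

lemma indep_node_coins:
  fixes V :: "'a set"
  assumes ne: "V \<noteq> {}" and fin: "finite V"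
  shows "prob_space.indep_vars (rand_space V) (\<lambda>_. coin_space) (\<lambda>v \<omega>. \<omega> v) V"
proof -
  interpret P: prob_space "rand_space V" by (rule prob_space_rand_space)
  have coord: "(\<lambda>\<omega>. \<omega> v) \<in> rand_space V \<rightarrow>\<^sub>M coin_space" for v :: 'a
  proof (cases "v \<in> V")
    case True
    then show ?thesis unfolding rand_space_def by (rule measurable_component_singleton)
  next
    case False
    then have "\<omega> v = undefined" if "\<omega> \<in> space (rand_space V)" for \<omega>
      using that by (auto simp: rand_space_def space_PiM PiE_def extensional_def)
    then show ?thesis by (subst measurable_cong[where g="\<lambda>_. undefined"]) (auto simp: space_coin_space)
  qed
  have restrict_V:
    "distr (rand_space V) (Pi\<^sub>M V (\<lambda>_. coin_space)) (\<lambda>\<omega>. restrict (\<lambda>v. \<omega> v) V) = rand_space V"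
    unfolding rand_space_def
    by (subst product_prob_space.distr_restrict[OF product_prob_space_coins, symmetric]) (auto simp: fin)
  show ?thesis
    unfolding P.indep_vars_iff_distr_eq_PiM[OF ne coord] restrict_V
    unfolding rand_space_def by (intro PiM_cong refl distr_PiM_component[symmetric] prob_space_coin_space)
qed

lemma measure_rand_space_restrict:
  assumes WV: "W \<subseteq> V" and fin: "finite V" and B: "B \<in> sets (rand_space W)"
  shows "measure (rand_space W) B =
           measure (rand_space V) ((\<lambda>\<omega>. restrict \<omega> W) -` B \<inter> space (rand_space V))"
proof -
  have restr: "(\<lambda>\<omega>. restrict \<omega> W) \<in> rand_space V \<rightarrow>\<^sub>M rand_space W"
    unfolding rand_space_def by (rule measurable_restrict_subset[OF WV])
  have "rand_space W = distr (rand_space V) (rand_space W) (\<lambda>\<omega>. restrict \<omega> W)"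
    unfolding rand_space_def by (rule product_prob_space.distr_restrict[OF product_prob_space_coins WV fin])
  then show ?thesis using measure_distr[OF restr B] by simp
qed

lemma prob_Inter_of_determined_events:
  fixes V :: "'a set" and D :: "nat \<Rightarrow> 'a set" and F :: "nat \<Rightarrow> ('a \<Rightarrow> nat \<Rightarrow> bool) set"
  assumes fin: "finite V" and ne: "V \<noteq> {}" and k: "0 < k"
    and DV: "\<And>m. m < k \<Longrightarrow> D m \<subseteq> V" and disj: "disjoint_family_on D {..<k}"
    and F: "\<And>m. m < k \<Longrightarrow> F m \<in> sets (rand_space V)"
    and det: "\<And>m \<omega> \<omega>'. m < k \<Longrightarrow> \<omega> \<in> space (rand_space V) \<Longrightarrow> \<omega>' \<in> space (rand_space V) \<Longrightarrow>
               (\<forall>v\<in>D m. \<omega> v = \<omega>' v) \<Longrightarrow> \<omega> \<in> F m \<Longrightarrow> \<omega>' \<in> F m"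
  shows "measure (rand_space V) (\<Inter>m<k. F m) = (\<Prod>m<k. measure (rand_space V) (F m))"
proof -
  interpret P: prob_space "rand_space V" by (rule prob_space_rand_space)
  let ?proj = "\<lambda>m \<omega>. restrict (\<lambda>v. \<omega> v) (D m)"
  have ind: "P.indep_vars (\<lambda>m. PiM (D m) (\<lambda>_. coin_space)) ?proj {..<k}"
    by (rule P.indep_vars_restrict[OF indep_node_coins[OF ne fin]]) (use DV disj in auto)
  text \<open>Each event is the preimage under \<open>?proj m\<close> of its trace on the coordinates \<open>D m\<close>,
    obtained by filling the other coordinates with a fixed coin sequence.\<close>
  define \<omega>0 :: "'a \<Rightarrow> nat \<Rightarrow> bool" where "\<omega>0 = restrict (\<lambda>_ _. True) V"
  define fill where "fill m \<eta> = (\<lambda>v. if v \<in> D m then \<eta> v else \<omega>0 v)" for m \<eta>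
  define B where "B m = fill m -` F m \<inter> space (PiM (D m) (\<lambda>_. coin_space))" for m
  have fill_meas: "fill m \<in> PiM (D m) (\<lambda>_. coin_space) \<rightarrow>\<^sub>M rand_space V" if m: "m < k" for m
    unfolding rand_space_def fill_def
  proof (rule measurable_PiM_single')
    fix v
    show "(\<lambda>\<eta>. if v \<in> D m then \<eta> v else \<omega>0 v) \<in> PiM (D m) (\<lambda>_. coin_space) \<rightarrow>\<^sub>M coin_space"
      by (cases "v \<in> D m") (simp_all add: measurable_component_singleton space_coin_space)
  next
    show "(\<lambda>\<eta> v. if v \<in> D m then \<eta> v else \<omega>0 v) \<in>
        space (PiM (D m) (\<lambda>_. coin_space)) \<rightarrow> (\<Pi>\<^sub>E v\<in>V. space coin_space)"
      using DV[OF m] by (auto simp: space_coin_space \<omega>0_def space_PiM PiE_def extensional_def)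
  qed
  have B_sets: "B m \<in> sets (PiM (D m) (\<lambda>_. coin_space))" if "m < k" for m
    unfolding B_def using measurable_sets[OF fill_meas[OF that] F[OF that]] .
  have preimage: "?proj m -` B m \<inter> space (rand_space V) = F m" if m: "m < k" for m
  proof (intro set_eqI iffI)
    fix \<omega> assume "\<omega> \<in> ?proj m -` B m \<inter> space (rand_space V)"
    then have \<omega>: "\<omega> \<in> space (rand_space V)" and filled: "fill m (restrict \<omega> (D m)) \<in> F m"
      by (auto simp: B_def)
    have "fill m (restrict \<omega> (D m)) \<in> space (rand_space V)"
      using F[OF m] sets.sets_into_space filled by blast
    then show "\<omega> \<in> F m" using det[OF m _ \<omega> _ filled] by (auto simp: fill_def)
  next
    fix \<omega> assume \<omega>: "\<omega> \<in> F m"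
    then have sp: "\<omega> \<in> space (rand_space V)" using F[OF m] sets.sets_into_space by blast
    have r: "restrict \<omega> (D m) \<in> space (PiM (D m) (\<lambda>_. coin_space))"
      by (simp add: space_PiM space_coin_space)
    have "fill m (restrict \<omega> (D m)) \<in> F m"
      using det[OF m sp measurable_space[OF fill_meas[OF m] r] _ \<omega>] by (auto simp: fill_def)
    then show "\<omega> \<in> ?proj m -` B m \<inter> space (rand_space V)" using sp r by (auto simp: B_def)
  qed
  have "P.prob (\<Inter>m\<in>{..<k}. ?proj m -` B m \<inter> space (rand_space V)) =
        (\<Prod>m\<in>{..<k}. P.prob (?proj m -` B m \<inter> space (rand_space V)))"
    by (rule P.indep_varsD[OF ind]) (use k B_sets in auto)
  then show ?thesis using preimage by simp
qed

subsection \<open>Walks, distances, balls and levels\<close>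

lemma rw_in: "rw V E n u w \<Longrightarrow> u \<in> V \<and> w \<in> V"
  by (induction n arbitrary: w) auto

lemma rw_mono: "rw V E n u w \<Longrightarrow> n \<le> m \<Longrightarrow> rw V E m u w"
  by (induction m) (auto simp: le_Suc_eq)

lemma rw_trans: "rw V E m a b \<Longrightarrow> rw V E n b c \<Longrightarrow> rw V E (m + n) a c"
  by (induction n arbitrary: c) auto

lemma rw_refl: "u \<in> V \<Longrightarrow> rw V E n u u"
  using rw_mono[of V E 0 u u n] by simp

lemma rw_sym:
  assumes G: "connected_graph V E"
  shows "rw V E n a b \<Longrightarrow> rw V E n b a"
proof (induction n arbitrary: b)
  case (Suc n)
  show ?case
  proof (cases "rw V E n a b")
    case False
    then obtain z where z: "rw V E n a z" "E z b" using Suc.prems by auto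
    with G have "rw V E (Suc 0) b z" unfolding connected_graph_def by auto
    from rw_trans[OF this Suc.IH[OF z(1)]] show ?thesis by simp
  qed (use Suc.IH in simp)
qed auto

lemma gdist_rw: "connected_graph V E \<Longrightarrow> u \<in> V \<Longrightarrow> w \<in> V \<Longrightarrow> rw V E (gdist V E u w) u w"
  unfolding gdist_def connected_graph_def by (meson LeastI_ex)

lemma gdist_le: "rw V E n u w \<Longrightarrow> gdist V E u w \<le> n"
  unfolding gdist_def by (rule Least_le)

lemma gdist_triangle:
  "connected_graph V E \<Longrightarrow> a \<in> V \<Longrightarrow> b \<in> V \<Longrightarrow> c \<in> V \<Longrightarrow>
   gdist V E a c \<le> gdist V E a b + gdist V E b c"
  by (meson gdist_le gdist_rw rw_trans)

lemma gdist_sym: "connected_graph V E \<Longrightarrow> a \<in> V \<Longrightarrow> b \<in> V \<Longrightarrow> gdist V E a b = gdist V E b a"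
  by (meson antisym gdist_le gdist_rw rw_sym)

lemma in_ball_iff: "w \<in> ball V E u n \<longleftrightarrow> rw V E n u w"
  by (simp add: ball_def)

lemma ball_mono: "n \<le> m \<Longrightarrow> ball V E u n \<subseteq> ball V E u m"
  by (auto simp: in_ball_iff intro: rw_mono)

lemma ball_subset: "ball V E u n \<subseteq> V"
  by (auto simp: in_ball_iff dest: rw_in)

lemma gdist_le_radius: "w \<in> ball V E u n \<Longrightarrow> gdist V E u w \<le> n"
  by (simp add: in_ball_iff gdist_le)

lemma ball_induced:
  assumes WV: "W \<subseteq> V" and inside: "ball V E u R \<subseteq> W" and n: "n \<le> R"
  shows "ball W (induced E W) u n = ball V E u n"
proof -
  have "rw W (induced E W) m u w \<Longrightarrow> rw V E m u w" for m w
    using WV by (induction m arbitrary: w) (auto simp: induced_def)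
  moreover have "rw V E m u w \<Longrightarrow> m \<le> R \<Longrightarrow> rw W (induced E W) m u w" for m w
  proof (induction m arbitrary: w)
    case (Suc m)
    have in_W: "rw V E (Suc m) u y \<Longrightarrow> y \<in> W" for y
      using inside rw_mono[of V E "Suc m" u y R] Suc.prems(2) by (auto simp: in_ball_iff)
    have IH: "rw V E m u y \<Longrightarrow> rw W (induced E W) m u y" for y using Suc by simp
    show ?case
      using Suc.prems(1) IH in_W[of w] in_W[OF rw_mono[of V E m u _ "Suc m"]]
      by (auto simp: induced_def)
  qed (use inside rw_refl[of u V E R] in \<open>auto simp: in_ball_iff\<close>)
  ultimately show ?thesis using n by (auto simp: in_ball_iff)
qed

lemma level_le: "finite U1 \<Longrightarrow> w \<in> U1 \<Longrightarrow> level V E U1 u \<le> gdist V E w u"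
  unfolding level_def by simp

lemma level_attained: "finite U1 \<Longrightarrow> U1 \<noteq> {} \<Longrightarrow> \<exists>w\<in>U1. level V E U1 u = gdist V E w u"
  unfolding level_def by (metis (no_types, lifting) Min_in finite_imageI image_iff image_is_empty)

lemma level_lipschitz:
  assumes G: "connected_graph V E" and U1: "U1 \<subseteq> V" "U1 \<noteq> {}" and uv: "u \<in> V" "v \<in> V"
  shows "level V E U1 v \<le> level V E U1 u + gdist V E u v"
proof -
  have fin: "finite U1" using G U1 unfolding connected_graph_def by (meson finite_subset)
  obtain w where w: "w \<in> U1" "level V E U1 u = gdist V E w u" using level_attained[OF fin U1(2)] by blast
  have "level V E U1 v \<le> gdist V E w v" by (rule level_le[OF fin w(1)])
  also have "\<dots> \<le> gdist V E w u + gdist V E u v" using gdist_triangle[OF G] w U1 uv by auto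
  finally show ?thesis using w by simp
qed

subsection \<open>Locality of the algorithm\<close>

lemma local_algD:
  assumes "local_alg A" "connected_graph V E" "connected_graph V' E'"
    "\<omega> \<in> space (rand_space V)" "\<omega>' \<in> space (rand_space V')" "v \<in> V" "v \<in> V'"
    "ball V E v r = ball V' E' v r"
    "\<forall>a\<in>ball V E v r. \<forall>b\<in>ball V E v r. E a b = E' a b"
    "\<forall>a\<in>ball V E v r. x a = x' a \<and> ids a = ids' a \<and> \<omega> a = \<omega>' a"
  shows "A V E x ids \<omega> v r = A V' E' x' ids' \<omega>' v r"
  using assms(1)[unfolded local_alg_def, rule_format, of V E V' E' \<omega> \<omega>' v r x x' ids ids'] assms(2-)
  by blast

lemma Least_output_cong:
  fixes f g :: "nat \<Rightarrow> 'b option"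
  assumes agree: "\<forall>n\<le>R. f n = g n" and out: "f m \<noteq> None" and m: "m \<le> R"
  shows "(LEAST n. f n \<noteq> None) = (LEAST n. g n \<noteq> None)"
proof -
  let ?l = "LEAST n. f n \<noteq> None"
  have l_out: "f ?l \<noteq> None" and l_le: "?l \<le> m" using out by (auto intro: LeastI Least_le)
  have before: "n < ?l \<Longrightarrow> f n = None" for n using not_less_Least by blast
  show ?thesis
  proof (rule Least_equality[symmetric])
    show "g ?l \<noteq> None" using l_out l_le agree m by auto
    show "?l \<le> n" if "g n \<noteq> None" for n
      using that before l_le agree m by (metis le_trans not_le_imp_less order.strict_implies_order)
  qed
qed

lemma outp_local:
  assumes AL: "local_alg A" and G: "connected_graph V E" and G': "connected_graph V' E'"
    and \<omega>: "\<omega> \<in> space (rand_space V)" and \<omega>': "\<omega>' \<in> space (rand_space V')"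
    and u: "u \<in> V" "u \<in> V'"
    and balls: "\<forall>n\<le>R. ball V E u n = ball V' E' u n"
    and edges: "\<forall>a\<in>ball V E u R. \<forall>b\<in>ball V E u R. E a b = E' a b"
    and coins: "\<forall>a\<in>ball V E u R. \<omega> a = \<omega>' a"
    and halt: "halt_round A V E x ids \<omega> u \<le> R"
    and outputs: "A V E x ids \<omega> u (halt_round A V E x ids \<omega> u) \<noteq> None"
  shows "outp A V E x ids \<omega> u = outp A V' E' x ids \<omega>' u"
proof -
  have same_states: "\<forall>n\<le>R. A V E x ids \<omega> u n = A V' E' x ids \<omega>' u n"
  proof (intro allI impI)
    fix n assume "n \<le> R"
    then have "ball V E u n \<subseteq> ball V E u R" by (rule ball_mono)
    then show "A V E x ids \<omega> u n = A V' E' x ids \<omega>' u n"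
      using balls edges coins \<open>n \<le> R\<close> by (intro local_algD[OF AL G G' \<omega> \<omega>' u]) blast+
  qed
  have "halt_round A V E x ids \<omega> u = halt_round A V' E' x ids \<omega>' u"
    using Least_output_cong[OF same_states outputs halt] by (simp add: halt_round_def)
  then show ?thesis unfolding outp_def using same_states halt by metis
qed

lemma halt_round_le_time:
  assumes "runs_in_time A t" "connected_graph V E" "inj_on ids V" "\<omega> \<in> space (rand_space V)" "u \<in> V"
  shows "halt_round A V E x ids \<omega> u \<le> t V E x ids \<and>
         A V E x ids \<omega> u (halt_round A V E x ids \<omega> u) \<noteq> None"
proof -
  have "A V E x ids \<omega> u (t V E x ids) \<noteq> None" using assms unfolding runs_in_time_def by blast
  then show ?thesis unfolding halt_round_def by (auto intro: LeastI Least_le)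
qed

lemma halt_round_le_t_node:
  assumes "runs_in_time A t" "connected_graph V E" "inj_on ids V" "\<omega> \<in> space (rand_space V)" "u \<in> V"
  shows "halt_round A V E x ids \<omega> u \<le> t_node A V E x ids u"
proof -
  have "{halt_round A V E x ids \<omega> u |\<omega>. \<omega> \<in> space (rand_space V)} \<subseteq> {..t V E x ids}"
    using halt_round_le_time[OF assms(1-3) _ assms(5)] by auto
  then have "finite {halt_round A V E x ids \<omega> u |\<omega>. \<omega> \<in> space (rand_space V)}"
    using finite_subset by blast
  then show ?thesis unfolding t_node_def using assms(4) by (intro Max_ge) auto
qed

text \<open>\<open>r_S\<close> bounds the running time \<open>t_u\<close> of every node \<open>u \<in> S\<close> (take \<open>u\<close> itself in the
  definition of \<open>r_u\<close>).\<close>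
lemma t_node_le_r_set:
  assumes G: "connected_graph V E" and S: "S \<subseteq> V" "u \<in> S"
  shows "t_node A V E x ids u \<le> r_set A V E x ids S"
proof -
  have fV: "finite V" using G unfolding connected_graph_def by blast
  have "{t_node A V E x ids w |w. w \<in> V \<and> u \<in> ball V E w (t_node A V E x ids w)} \<subseteq> t_node A V E x ids ` V"
    by blast
  then have fin: "finite {t_node A V E x ids w |w. w \<in> V \<and> u \<in> ball V E w (t_node A V E x ids w)}"
    using finite_subset fV by blast
  have "t_node A V E x ids u \<le> r_node A V E x ids u"
    unfolding r_node_def using S rw_refl[of u V] by (intro Max_ge[OF fin]) (auto simp: in_ball_iff)
  also have "\<dots> \<le> r_set A V E x ids S"
    unfolding r_set_def using S fV finite_subset by (intro Max_ge) auto
  finally show ?thesis .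
qed

text \<open>Within the time bound, "\<open>u\<close> outputs yes" is a finite Boolean combination of the
  measurable states of \<open>u\<close>, hence \<open>\<E>(U)\<close> is an event.\<close>
lemma Ev_sets:
  assumes AM: "measurable_alg A" and AT: "runs_in_time A t" and G: "connected_graph V E"
    and inj: "inj_on ids V" and U: "U \<subseteq> V"
  shows "Ev A V E x ids U \<in> sets (rand_space V)"
proof -
  let ?T = "t V E x ids" and ?st = "\<lambda>\<omega> u n. A V E x ids \<omega> u n"
  let ?yes_at = "\<lambda>\<omega> u. \<exists>n\<in>{..?T}. ?st \<omega> u n = Some True \<and> (\<forall>m\<in>{..<n}. ?st \<omega> u m = None)"
  have fU: "finite U" using G U unfolding connected_graph_def by (meson finite_subset)
  have yes: "outp A V E x ids \<omega> u \<longleftrightarrow> ?yes_at \<omega> u"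
    if \<omega>: "\<omega> \<in> space (rand_space V)" and u: "u \<in> V" for \<omega> u
  proof -
    let ?h = "halt_round A V E x ids \<omega> u"
    have h: "?h \<le> ?T" "?st \<omega> u ?h \<noteq> None" using halt_round_le_time[OF AT G inj \<omega> u] by auto
    have before: "m < ?h \<Longrightarrow> ?st \<omega> u m = None" for m
      unfolding halt_round_def using not_less_Least by blast
    have first: "?st \<omega> u n \<noteq> None \<Longrightarrow> \<forall>m<n. ?st \<omega> u m = None \<Longrightarrow> ?h = n" for n
      unfolding halt_round_def by (rule Least_equality) (auto simp: not_less[symmetric])
    show ?thesis
    proof
      assume "outp A V E x ids \<omega> u"
      then have "?st \<omega> u ?h = Some True" using h unfolding outp_def by (auto split: option.splits)
      then show "?yes_at \<omega> u" using h before by auto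
    next
      assume "?yes_at \<omega> u"
      then obtain n where n: "?st \<omega> u n = Some True" "\<forall>m<n. ?st \<omega> u m = None" by auto
      then show "outp A V E x ids \<omega> u" using first[of n] unfolding outp_def by simp
    qed
  qed
  have "Measurable.pred (rand_space V) (\<lambda>\<omega>. \<forall>u\<in>U. ?yes_at \<omega> u)"
    using U AM G unfolding measurable_alg_def
    by (intro pred_intros_finite pred_intros_logic pred_count_space_const1 fU finite_atMost
        finite_lessThan) auto
  moreover have "Ev A V E x ids U = {\<omega> \<in> space (rand_space V). \<forall>u\<in>U. ?yes_at \<omega> u}"
    unfolding Ev_def using yes U by blast
  ultimately show ?thesis unfolding pred_def by simp
qed

lemma Ev_Union:
  "I \<noteq> {} \<Longrightarrow> Ev A V E x ids (\<Union>i\<in>I. U i) = (\<Inter>i\<in>I. Ev A V E x ids (U i))"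
  unfolding Ev_def by blast

subsection \<open>Views\<close>

text \<open>The outputs of
  the nodes of \<open>U\<close> depend only on the part of the configuration inside their view.\<close>
definition view :: "'v alg \<Rightarrow> 'v set \<Rightarrow> ('v \<Rightarrow> 'v \<Rightarrow> bool) \<Rightarrow> ('v \<Rightarrow> bool list) \<Rightarrow> ('v \<Rightarrow> nat)
    \<Rightarrow> 'v set \<Rightarrow> 'v set" where
  "view A V E x ids U = (\<Union>u\<in>U. ball V E u (t_node A V E x ids u))"

lemma view_subset: "view A V E x ids U \<subseteq> V"
  unfolding view_def by (intro UN_least ball_subset)

lemma subset_view:
  assumes "U \<subseteq> V"
  shows "U \<subseteq> view A V E x ids U"
proof
  fix u assume u: "u \<in> U"
  with assms have "u \<in> ball V E u (t_node A V E x ids u)" by (auto simp: in_ball_iff intro: rw_refl)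
  with u show "u \<in> view A V E x ids U" unfolding view_def by blast
qed


lemma view_UN: "view A V E x ids (\<Union>i\<in>I. U i) = (\<Union>i\<in>I. view A V E x ids (U i))"
  unfolding view_def by simp

lemma view_subset_balls:
  assumes "connected_graph V E" "S \<subseteq> V" "U \<subseteq> S"
  shows "view A V E x ids U \<subseteq> (\<Union>u\<in>U. ball V E u (r_set A V E x ids S))"
proof
  fix v assume "v \<in> view A V E x ids U"
  then obtain u where u: "u \<in> U" and v: "v \<in> ball V E u (t_node A V E x ids u)"
    unfolding view_def by blast
  have "t_node A V E x ids u \<le> r_set A V E x ids S"
    using u assms(3) by (intro t_node_le_r_set[OF assms(1,2)]) blast
  then have "v \<in> ball V E u (r_set A V E x ids S)" by (rule subsetD[OF ball_mono v])
  with u show "v \<in> (\<Union>u\<in>U. ball V E u (r_set A V E x ids S))" by blast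
qed

lemma Ev_determined_by_view:
  assumes AL: "local_alg A" and AT: "runs_in_time A t" and G: "connected_graph V E"
    and inj: "inj_on ids V" and U: "U \<subseteq> V"
    and \<omega>: "\<omega> \<in> space (rand_space V)" and \<omega>': "\<omega>' \<in> space (rand_space V)"
    and agree: "\<forall>a\<in>view A V E x ids U. \<omega> a = \<omega>' a" and yes: "\<omega> \<in> Ev A V E x ids U"
  shows "\<omega>' \<in> Ev A V E x ids U"
proof -
  have "outp A V E x ids \<omega> u = outp A V E x ids \<omega>' u" if u: "u \<in> U" for u
  proof (rule outp_local[where R = "t_node A V E x ids u", OF AL G G \<omega> \<omega>'])
    show "u \<in> V" using u U by blast
    then show "halt_round A V E x ids \<omega> u \<le> t_node A V E x ids u"
      and "A V E x ids \<omega> u (halt_round A V E x ids \<omega> u) \<noteq> None"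
      using halt_round_le_t_node[OF AT G inj \<omega>] halt_round_le_time[OF AT G inj \<omega>] by blast+
    show "\<forall>a\<in>ball V E u (t_node A V E x ids u). \<omega> a = \<omega>' a" using agree u unfolding view_def by blast
  qed (use u U in auto)
  then have "\<forall>u\<in>U. outp A V E x ids \<omega>' u" using yes unfolding Ev_def by auto
  then show ?thesis using \<omega>' unfolding Ev_def by blast
qed

lemma outp_induced:
  assumes AL: "local_alg A" and AT: "runs_in_time A t" and G: "connected_graph V E"
    and inj: "inj_on ids V" and WV: "W \<subseteq> V" and GW: "connected_graph W (induced E W)"
    and \<omega>: "\<omega> \<in> space (rand_space V)" and u: "u \<in> V"
    and inside: "ball V E u (t_node A V E x ids u) \<subseteq> W"
  shows "outp A V E x ids \<omega> u = outp A W (induced E W) x ids (restrict \<omega> W) u"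
proof (rule outp_local[where R = "t_node A V E x ids u", OF AL G GW \<omega> _ u])
  show "restrict \<omega> W \<in> space (rand_space W)" using \<omega> WV by (auto simp: rand_space_def space_PiM)
  show "u \<in> W" using inside rw_refl[OF u] by (auto simp: in_ball_iff)
  show "\<forall>n\<le>t_node A V E x ids u. ball V E u n = ball W (induced E W) u n"
    using ball_induced[OF WV inside] by simp
  show "\<forall>a\<in>ball V E u (t_node A V E x ids u). \<forall>b\<in>ball V E u (t_node A V E x ids u).
      E a b = induced E W a b"
    using inside by (auto simp: induced_def)
  show "\<forall>a\<in>ball V E u (t_node A V E x ids u). \<omega> a = restrict \<omega> W a" using inside by auto
  show "halt_round A V E x ids \<omega> u \<le> t_node A V E x ids u"
    and "A V E x ids \<omega> u (halt_round A V E x ids \<omega> u) \<noteq> None"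
    using halt_round_le_t_node[OF AT G inj \<omega> u] halt_round_le_time[OF AT G inj \<omega> u] by blast+
qed

lemma Ev_induced:
  assumes AL: "local_alg A" and AT: "runs_in_time A t" and G: "connected_graph V E"
    and inj: "inj_on ids V" and WV: "W \<subseteq> V" and GW: "connected_graph W (induced E W)"
    and U: "U \<subseteq> V" and inside: "view A V E x ids U \<subseteq> W" and \<omega>: "\<omega> \<in> space (rand_space V)"
  shows "\<omega> \<in> Ev A V E x ids U \<longleftrightarrow> restrict \<omega> W \<in> Ev A W (induced E W) x ids U"
proof -
  have "restrict \<omega> W \<in> space (rand_space W)" using \<omega> WV by (auto simp: rand_space_def space_PiM)
  moreover have "outp A V E x ids \<omega> u = outp A W (induced E W) x ids (restrict \<omega> W) u" if "u \<in> U" for u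
    using that U inside by (intro outp_induced[OF AL AT G inj WV GW \<omega>]) (auto simp: view_def)
  ultimately show ?thesis using \<omega> unfolding Ev_def by auto
qed

text \<open>If the subconfiguration induced by \<open>W\<close> belongs to the language, then every set of nodes
  whose view lies inside \<open>W\<close> accepts with probability at least \<open>p\<close>: on \<open>W\<close> all nodes accept with
  probability at least \<open>p\<close>, and these nodes cannot tell \<open>G\<close> from \<open>G[W]\<close>.\<close>
lemma accepting_subconfiguration:
  assumes AL: "local_alg A" and AM: "measurable_alg A" and AT: "runs_in_time A t"
    and G: "connected_graph V E" and inj: "inj_on ids V"
    and dec: "decider A L p q" and L_conn: "\<forall>(V', E', x')\<in>L. connected_graph V' E'"
    and WV: "W \<subseteq> V" and WL: "(W, induced E W, restrict x W) \<in> L"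
    and U: "U \<subseteq> V" and inside: "view A V E x ids U \<subseteq> W"
  shows "p \<le> measure (rand_space V) (Ev A V E x ids U)"
proof -
  interpret PW: prob_space "rand_space W" by (rule prob_space_rand_space)
  have GW: "connected_graph W (induced E W)" using L_conn WL by fastforce
  have injW: "inj_on ids W" using inj WV inj_on_subset by blast
  have UW: "U \<subseteq> W" using inside subset_view[OF U] by blast
  have EvW: "Ev A W (induced E W) x ids U \<in> sets (rand_space W)" by (rule Ev_sets[OF AM AT GW injW UW])
  have "p \<le> measure (rand_space W) (Ev A W (induced E W) x ids W)"
    using dec GW injW WL unfolding decider_def by blast
  also have "\<dots> \<le> measure (rand_space W) (Ev A W (induced E W) x ids U)"
    using UW by (intro PW.finite_measure_mono[OF _ EvW]) (auto simp: Ev_def)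
  also have "\<dots> = measure (rand_space V)
      ((\<lambda>\<omega>. restrict \<omega> W) -` Ev A W (induced E W) x ids U \<inter> space (rand_space V))"
    using measure_rand_space_restrict[OF WV _ EvW] G by (simp add: connected_graph_def)
  also have "(\<lambda>\<omega>. restrict \<omega> W) -` Ev A W (induced E W) x ids U \<inter> space (rand_space V) =
      Ev A V E x ids U"
  proof -
    have "Ev A V E x ids U \<subseteq> space (rand_space V)" unfolding Ev_def by blast
    then show ?thesis using Ev_induced[OF AL AT G inj WV GW U inside] by blast
  qed
  finally show ?thesis .
qed

lemma prob_Ev_Union_disjoint_views:
  fixes k :: nat and U :: "nat \<Rightarrow> 'v set"
  assumes AL: "local_alg A" and AM: "measurable_alg A" and AT: "runs_in_time A t"
    and G: "connected_graph V E" and inj: "inj_on ids V"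
    and k: "0 < k" and U: "\<And>m. m < k \<Longrightarrow> U m \<subseteq> V"
    and disj: "disjoint_family_on (\<lambda>m. view A V E x ids (U m)) {..<k}"
  shows "measure (rand_space V) (Ev A V E x ids (\<Union>m<k. U m)) =
           (\<Prod>m<k. measure (rand_space V) (Ev A V E x ids (U m)))"
proof -
  have "Ev A V E x ids (\<Union>m<k. U m) = (\<Inter>m<k. Ev A V E x ids (U m))"
    using k by (intro Ev_Union) auto
  also have "measure (rand_space V) \<dots> = (\<Prod>m<k. measure (rand_space V) (Ev A V E x ids (U m)))"
  proof (rule prob_Inter_of_determined_events[where D = "\<lambda>m. view A V E x ids (U m)"])
    show "finite V" "V \<noteq> {}" using G unfolding connected_graph_def by auto
    show "\<omega>' \<in> Ev A V E x ids (U m)"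
      if "m < k" "\<omega> \<in> space (rand_space V)" "\<omega>' \<in> space (rand_space V)"
        "\<forall>v\<in>view A V E x ids (U m). \<omega> v = \<omega>' v" "\<omega> \<in> Ev A V E x ids (U m)" for m \<omega> \<omega>'
      by (rule Ev_determined_by_view[OF AL AT G inj U[OF that(1)] that(2-5)])
    show "Ev A V E x ids (U m) \<in> sets (rand_space V)" if "m < k" for m
      using that by (rule Ev_sets[OF AM AT G inj U])
    show "view A V E x ids (U m) \<subseteq> V" for m by (rule view_subset)
  qed (use k disj in auto)
  finally show ?thesis .
qed

subsection \<open>Slabs\<close>

lemma in_slab_iff:
  "u \<in> slab V E U1 S r i \<longleftrightarrow>
     u \<in> S \<and> i - int r \<le> int (level V E U1 u) \<and> int (level V E U1 u) \<le> i + int r"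
  unfolding slab_def by auto

lemma slab_subset: "slab V E U1 S r i \<subseteq> S"
  unfolding slab_def by auto

text \<open>If \<open>i + 2 r_S < d\<close>, the view of the slab \<open>S_i\<close> lies inside \<open>U1 \<union> S\<close>: every node of the
  view is at distance at most \<open>i + 2 r_S\<close> from \<open>U1\<close>, while \<open>U2\<close> is at distance at least \<open>d\<close>.\<close>
lemma view_of_slab_avoids_U2:
  assumes G: "connected_graph V E" and split: "splitter A V E x ids lam S U1 U2" and U1: "U1 \<noteq> {}"
    and i: "i + 2 * int (r_set A V E x ids S) < int lam * int (r_set A V E x ids S)"
  shows "view A V E x ids (slab V E U1 S (r_set A V E x ids S) i) \<subseteq> U1 \<union> S"
proof -
  let ?r = "r_set A V E x ids S"
  have parts: "S \<union> U1 \<union> U2 = V" and far: "\<forall>w\<in>U1. \<forall>v\<in>U2. lam * ?r \<le> gdist V E w v"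
    using split unfolding splitter_def by auto
  have "finite (S \<union> U1 \<union> U2)" using G parts unfolding connected_graph_def by simp
  then have fU1: "finite U1" by simp
  have "ball V E u ?r \<subseteq> U1 \<union> S" if u: "u \<in> slab V E U1 S ?r i" for u
  proof
    fix v assume v: "v \<in> ball V E u ?r"
    have uV: "u \<in> V" and vV: "v \<in> V" using v by (auto simp: in_ball_iff dest: rw_in)
    obtain w where w: "w \<in> U1" "level V E U1 u = gdist V E w u"
      using level_attained[OF fU1 U1] by blast
    have "gdist V E w v \<le> gdist V E w u + gdist V E u v"
      using gdist_triangle[OF G] w(1) parts uV vV by blast
    then have close: "int (gdist V E w v) \<le> i + 2 * int ?r"
      using w(2) gdist_le_radius[OF v] u by (auto simp: in_slab_iff)
    have "v \<notin> U2"
    proof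
      assume "v \<in> U2"
      then have "lam * ?r \<le> gdist V E w v" using far w(1) by blast
      then have "int lam * int ?r \<le> int (gdist V E w v)" by (metis of_nat_le_iff of_nat_mult)
      then show False using close i by linarith
    qed
    then show "v \<in> U1 \<union> S" using vV parts by blast
  qed
  moreover have "S \<subseteq> V" using parts by blast
  then have "view A V E x ids (slab V E U1 S ?r i) \<subseteq> (\<Union>u\<in>slab V E U1 S ?r i. ball V E u ?r)"
    by (rule view_subset_balls[OF G _ slab_subset])
  ultimately show ?thesis by blast
qed

text \<open>Slabs whose level ranges are more than \<open>2 r_S\<close> apart have disjoint views: the level is
  1-Lipschitz, and two nodes with intersecting \<open>r_S\<close>-balls are at distance at most \<open>2 r_S\<close>.\<close>
lemma views_of_distant_slabs_disjoint:
  assumes G: "connected_graph V E" and SV: "S \<subseteq> V" and U1: "U1 \<subseteq> V" "U1 \<noteq> {}"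
    and ij: "i + 4 * int (r_set A V E x ids S) < j"
  shows "view A V E x ids (slab V E U1 S (r_set A V E x ids S) i) \<inter>
         view A V E x ids (slab V E U1 S (r_set A V E x ids S) j) = {}"
proof -
  let ?r = "r_set A V E x ids S"
  have "ball V E u ?r \<inter> ball V E u' ?r = {}"
    if u: "u \<in> slab V E U1 S ?r i" and u': "u' \<in> slab V E U1 S ?r j" for u u'
  proof (rule ccontr)
    assume "ball V E u ?r \<inter> ball V E u' ?r \<noteq> {}"
    then obtain v where v: "v \<in> ball V E u ?r" "v \<in> ball V E u' ?r" by blast
    have V: "u \<in> V" "u' \<in> V" "v \<in> V" using v by (auto simp: in_ball_iff dest: rw_in)
    have "gdist V E u u' \<le> 2 * ?r"
      using gdist_triangle[OF G V(1,3,2)] gdist_sym[OF G V(3,2)]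
        gdist_le_radius[OF v(1)] gdist_le_radius[OF v(2)] by linarith
    then have "level V E U1 u' \<le> level V E U1 u + 2 * ?r"
      using level_lipschitz[OF G U1 V(1,2)] by linarith
    moreover have "j - int ?r \<le> int (level V E U1 u')" "int (level V E U1 u) \<le> i + int ?r"
      using u u' by (simp_all add: in_slab_iff)
    ultimately show False using ij by linarith
  qed
  moreover have "view A V E x ids (slab V E U1 S ?r l) \<subseteq> (\<Union>u\<in>slab V E U1 S ?r l. ball V E u ?r)"
    for l by (rule view_subset_balls[OF G SV slab_subset])
  ultimately show ?thesis by blast
qed

text \<open>Without \<open>U1\<close> all levels coincide, so some slab in the admissible range is empty.\<close>
lemma empty_slab_without_U1:
  assumes U1: "U1 = {}" and r: "1 \<le> r" and d: "11 * int r \<le> d"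
  shows "\<exists>i. 2 * int r < i \<and> i < d - 2 * int r \<and> slab V E U1 S r i = {}"
proof -
  define c where "c = int (level V E U1 undefined)"
  have level: "int (level V E U1 u) = c" for u unfolding c_def level_def U1 by simp
  define i where "i = (if c \<le> 3 * int r + 1 then d - 2 * int r - 1 else 2 * int r + 1)"
  have "slab V E U1 S r i = {}" using level r d unfolding i_def by (auto simp: in_slab_iff)
  moreover have "2 * int r < i \<and> i < d - 2 * int r" using r d unfolding i_def by auto
  ultimately show ?thesis by blast
qed

text \<open>\<open>k = \<lceil>log p / log (1 - \<delta>)\<rceil>\<close> is the least number of independent events of probability
  below \<open>1 - \<delta>\<close> whose joint probability drops to \<open>p\<close>.\<close>
lemma geometric_exponent:
  fixes p \<delta> :: real
  assumes p: "0 < p" "p < 1" and \<delta>: "0 < \<delta>" "\<delta> < 1"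
  defines "k \<equiv> nat \<lceil>ln p / ln (1 - \<delta>)\<rceil>"
  shows "1 \<le> k" and "(1 - \<delta>) ^ k \<le> p"
proof -
  have ln\<delta>: "ln (1 - \<delta>) < 0" and lnp: "ln p < 0" using p \<delta> by simp_all
  then have "0 < ln p / ln (1 - \<delta>)" by (simp add: divide_neg_neg)
  then show "1 \<le> k" unfolding k_def by linarith
  have "ln p / ln (1 - \<delta>) \<le> real k" unfolding k_def by linarith
  then have "ln ((1 - \<delta>) ^ k) \<le> ln p" using ln\<delta> \<delta> by (simp add: divide_le_eq ln_realpow mult.commute)
  then show "(1 - \<delta>) ^ k \<le> p" using p \<delta> by simp
qed

lemma spaced_positions:
  fixes r :: int and k m m' :: nat
  assumes r: "1 \<le> r"
  shows "m < k \<Longrightarrow> 2 * r < 2 * r + 1 + int m * (4 * r + 1) \<and>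
      2 * r + 1 + int m * (4 * r + 1) + 2 * r < 11 * int k * r"
    and "m < m' \<Longrightarrow> 2 * r + 1 + int m * (4 * r + 1) + 4 * r < 2 * r + 1 + int m' * (4 * r + 1)"
proof -
  assume "m < k"
  then have "(int m + 1) * (4 * r + 1) \<le> int k * (4 * r + 1)" using r by (intro mult_right_mono) auto
  moreover have "1 \<le> int k" using \<open>m < k\<close> by simp
  moreover have "int k \<le> int k * r" using r by (simp add: mult_le_cancel_left1)
  moreover have "(int m + 1) * (4 * r + 1) = 2 * r + 1 + int m * (4 * r + 1) + 2 * r"
    and "int k * (4 * r + 1) = 4 * (int k * r) + int k" and "11 * int k * r = 11 * (int k * r)"
    by (simp_all add: algebra_simps)
  moreover have "0 \<le> int m * (4 * r + 1)" using r by simp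
  ultimately show "2 * r < 2 * r + 1 + int m * (4 * r + 1) \<and>
      2 * r + 1 + int m * (4 * r + 1) + 2 * r < 11 * int k * r" by linarith
next
  assume "m < m'"
  then have "(int m + 1) * (4 * r + 1) \<le> int m' * (4 * r + 1)" using r by (intro mult_right_mono) auto
  then show "2 * r + 1 + int m * (4 * r + 1) + 4 * r < 2 * r + 1 + int m' * (4 * r + 1)"
    by (simp add: algebra_simps)
qed

lemma spaced_slabs:
  fixes k :: nat and U :: "nat \<Rightarrow> 'v set"
  assumes G: "connected_graph V E" and split: "splitter A V E x ids lam S U1 U2" and U1: "U1 \<noteq> {}"
    and r1: "1 \<le> r_set A V E x ids S" and lam: "lam = 11 * k"
    and U_def: "\<And>m. U m = slab V E U1 S (r_set A V E x ids S)
                  (2 * int (r_set A V E x ids S) + 1 + int m * (4 * int (r_set A V E x ids S) + 1))"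
  shows "m < k \<Longrightarrow> 2 * int (r_set A V E x ids S) < 2 * int (r_set A V E x ids S) + 1 +
             int m * (4 * int (r_set A V E x ids S) + 1) \<and>
           2 * int (r_set A V E x ids S) + 1 + int m * (4 * int (r_set A V E x ids S) + 1) <
             int lam * int (r_set A V E x ids S) - 2 * int (r_set A V E x ids S)"
    and "view A V E x ids (\<Union>m<k. U m) \<subseteq> U1 \<union> S"
    and "disjoint_family_on (\<lambda>m. view A V E x ids (U m)) {..<k}"
proof -
  let ?r = "r_set A V E x ids S"
  let ?pos = "\<lambda>m. 2 * int ?r + 1 + int m * (4 * int ?r + 1)"
  have SU1: "S \<subseteq> V" "U1 \<subseteq> V" using split unfolding splitter_def by auto
  have range: "2 * int ?r < ?pos m \<and> ?pos m + 2 * int ?r < int lam * int ?r" if "m < k" for m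
    using spaced_positions(1)[OF _ that] r1 unfolding lam by simp
  then show "m < k \<Longrightarrow> 2 * int ?r < ?pos m \<and> ?pos m < int lam * int ?r - 2 * int ?r" by auto
  have "view A V E x ids (U m) \<subseteq> U1 \<union> S" if "m < k" for m
    unfolding U_def using range[OF that] by (intro view_of_slab_avoids_U2[OF G split U1]) simp
  then show "view A V E x ids (\<Union>m<k. U m) \<subseteq> U1 \<union> S" unfolding view_UN by blast
  have "view A V E x ids (U m) \<inter> view A V E x ids (U m') = {}" if "m < m'" for m m'
    unfolding U_def using spaced_positions(2)[OF _ that] r1
    by (intro views_of_distant_slabs_disjoint[OF G SU1 U1]) simp
  then show "disjoint_family_on (\<lambda>m. view A V E x ids (U m)) {..<k}"
    unfolding disjoint_family_on_def by (metis Int_commute linorder_neqE_nat)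
qed

theorem claim1:
  fixes L :: "'v language" and A :: "'v alg" and t :: "'v tbound"
    and p q \<delta> :: real and lam :: nat
    and V :: "'v set" and E :: "'v \<Rightarrow> 'v \<Rightarrow> bool" and x :: "'v \<Rightarrow> bool list"
    and ids :: "'v \<Rightarrow> nat" and S U1 U2 :: "'v set"
  assumes L_configs: "\<forall>(V', E', x') \<in> L. connected_graph V' E'"
    and p_pos: "0 < p" and p_lt1: "p < 1" and q_pos: "0 < q" and q_le1: "q \<le> 1"
    and pq: "p\<^sup>2 + q > 1"
    and A_local: "local_alg A" and A_meas: "measurable_alg A"
    and A_time: "runs_in_time A t" and t_mono: "time_bound_mono t"
    and A_dec: "decider A L p q"
    and delta: "0 < \<delta>" "\<delta> < p\<^sup>2 + q - 1"
    and lam_def: "lam = 11 * nat \<lceil>ln p / ln (1 - \<delta>)\<rceil>"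
    and G: "connected_graph V E" and Id_inj: "inj_on ids V"
    and split: "splitter A V E x ids lam S U1 U2"
    and rS: "r_set A V E x ids S \<ge> 1"
    and inL: "(U1 \<union> S, induced E (U1 \<union> S), restrict x (U1 \<union> S)) \<in> L"
  shows "let r = int (r_set A V E x ids S); d = int lam * r;
             I = {i :: int. 2 * r < i \<and> i < d - 2 * r \<and>
                    measure (rand_space V)
                      (Ev A V E x ids (slab V E U1 S (r_set A V E x ids S) i)) < 1 - \<delta>}
         in \<exists>i :: int. 2 * r < i \<and> i < d - 2 * r \<and> i \<notin> I"
proof -
  let ?r = "r_set A V E x ids S" and ?P = "measure (rand_space V)"
  define k where "k = nat \<lceil>ln p / ln (1 - \<delta>)\<rceil>"
  have "p\<^sup>2 \<le> 1" using p_pos p_lt1 by (simp add: power_le_one)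
  then have "\<delta> < 1" using delta q_le1 by linarith
  then have k: "1 \<le> k" "(1 - \<delta>) ^ k \<le> p"
    using geometric_exponent[OF p_pos p_lt1 delta(1)] unfolding k_def by auto
  have lam: "lam = 11 * k" using lam_def k_def by simp
  have "\<exists>i. 2 * int ?r < i \<and> i < int lam * int ?r - 2 * int ?r \<and>
            \<not> ?P (Ev A V E x ids (slab V E U1 S ?r i)) < 1 - \<delta>"
  proof (cases "U1 = {}")
    case True
    have "11 * int ?r \<le> int lam * int ?r" using k(1) by (simp add: lam mult_le_cancel_right1)
    then obtain i where "2 * int ?r < i \<and> i < int lam * int ?r - 2 * int ?r \<and> slab V E U1 S ?r i = {}"
      using empty_slab_without_U1[OF True rS, where V = V and E = E and S = S] by blast
    moreover have "?P (Ev A V E x ids {}) = 1"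
      using prob_space.prob_space[OF prob_space_rand_space] by (simp add: Ev_def)
    ultimately show ?thesis using delta(1) by auto
  next
    case U1: False
    define U where "U m = slab V E U1 S ?r (2 * int ?r + 1 + int m * (4 * int ?r + 1))" for m :: nat
    note slabs = spaced_slabs[OF G split U1 rS lam U_def]
    have U_V: "U m \<subseteq> V" and W_V: "U1 \<union> S \<subseteq> V" for m
      using split slab_subset[of V E U1 S] unfolding U_def splitter_def by blast+
    show ?thesis
    proof (rule ccontr)
      assume "\<not> ?thesis"
      then have bad: "?P (Ev A V E x ids (U m)) < 1 - \<delta>" if "m < k" for m
        using slabs(1)[OF that] unfolding U_def by auto
      have "p \<le> ?P (Ev A V E x ids (\<Union>m<k. U m))"
        using U_V slabs(2) by (intro accepting_subconfiguration[OF A_local A_meas A_time G Id_inj A_dec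
            L_configs W_V inL]) auto
      also have "\<dots> = (\<Prod>m<k. ?P (Ev A V E x ids (U m)))"
        using k(1) U_V slabs(3) by (intro prob_Ev_Union_disjoint_views[OF A_local A_meas A_time G Id_inj]) auto
      also have "\<dots> < (\<Prod>m<k. 1 - \<delta>)"
        using bad k(1) \<open>\<delta> < 1\<close> by (intro prod_mono_strict[of 0]) (auto intro: less_imp_le)
      also have "\<dots> \<le> p" using k(2) by simp
      finally show False by simp
    qed
  qed
  then show ?thesis unfolding Let_def by auto
qed

end
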